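(* Let $p$ be a prime and let $\mathcal{C}\subseteq\mathbb{F}_p^{N'}$ be a linear $b$-quasi-cyclic code of dimension $K$ with a systematic generator matrix, where $L\triangleq N'/b$ is an integer, $r_d\triangleq K/N'$ satisfies $r_d b\in\mathbb{Z}$, and $D_{max}<L$ is a nonnegative integer. Transmit a codeword $\mathbf{c}\in\mathcal{C}$ with the interleave/deinterleave transform (IDT) described in the context, over the channel $y[n]=x[n-\tau]+z[n]$ with integer delay $\tau\in\{0,\ldots,D_{max}\}$ (with $x[n]=0$ for $n\le 0$) and i.i.d. noise $z[n]\sim\mathcal{N}(0,1)$. Suppose the receiver does not compensate the delay, i.e. it applies CP removal and deinterleaving directly to the received sequence $\mathbf{y}$, which is a noisy version of $[0,\ldots,0,\mathbf{x}[1],\ldots,\mathbf{x}[b]]$ with $\tau$ leading zeros. Then the deinterleaver output equals $\tilde{\mathbf{x}}^{(b\tau)}+\tilde{\mathbf{z}}$, where $\tilde{\mathbf{x}}=\mathcal{M}(\mathbf{c})$ and $\tilde{\mathbf{z}}$ has i.i.d. $\mathcal{N}(0,1)$ entries; that is, the IDT transforms the received signal into a noisy version of the codeword circularly shifted by $b\tau$. Moreover, $\tilde{\mathbf{x}}^{(b\tau)}=\mathcal{M}(\mathbf{c}^{(b\tau)})$ with $\mathbf{c}^{(b\tau)}\in\mathcal{C}$, so one can directly decode $\mathbf{c}^{(b\tau)}$.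
   Context: For a vector $\mathbf{x}$ of length $n$, $\mathbf{x}^{(t)}$ denotes its right circular shift by $t$ positions (e.g. $[1,2,3,4]^{(1)}=[4,1,2,3]$). A linear code $\mathcal{C}$ of length $N'$ is $b$-quasi-cyclic ($b$-QC) if for every $\mathbf{c}\in\mathcal{C}$, $\mathbf{c}^{(bi)}\in\mathcal{C}$ for all integers $i$. The mapping $\mathcal{M}:\mathbb{F}_p\to\mathbb{R}$ (applied componentwise) is $\mathcal{M}(u)=u$ for $0\le u\le (p-1)/2$, $\mathcal{M}(u)=u-p$ for $(p-1)/2<u<p$ when $p\ge3$, and $\mathcal{M}(u)=u-1/2$ when $p=2$. IDT at the transmitter: (1) form $\tilde{\mathbf{x}}=\mathcal{M}(\mathbf{c})\in\mathbb{R}^{N'}$; (2) interleave: $\bar{\mathbf{x}}=[\bar{\mathbf{x}}[1],\ldots,\bar{\mathbf{x}}[b]]$ consists of $b$ sub-blocks of length $L$, where sub-block $s$ is $\bar{\mathbf{x}}[s]=(\tilde{x}[s],\tilde{x}[s+b],\ldots,\tilde{x}[s+(L-1)b])$ (write column-wise, transmit row-wise interleaver); (3) for each of the first $r_d b$ sub-blocks (which carry message symbols of the systematic encoder), the last $D_{max}$ symbols are frozen to zero and the sub-block is sent as is, $\mathbf{x}[s]=\bar{\mathbf{x}}[s]$; for each of the last $(1-r_d)b$ sub-blocks a cyclic prefix is prepended, $\mathbf{x}[s]=[\bar{x}^{L-D_{max}+1}[s],\ldots,\bar{x}^{L}[s],\bar{x}^1[s],\ldots,\bar{x}^L[s]]$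 (where $\bar x^{l}[s]$ is the $l$-th entry of $\bar{\mathbf{x}}[s]$); the transmitted signal is $\mathbf{x}=[\mathbf{x}[1],\ldots,\mathbf{x}[b]]$, of length $N'+(1-r_d)bD_{max}$. At the receiver: CP removal discards the received samples at the positions where the cyclic prefixes are located in the undelayed frame and keeps the $b$ length-$L$ windows at the positions of the sub-blocks $\bar{\mathbf{x}}[s]$, giving $\bar{\mathbf{y}}=[\bar{\mathbf{y}}[1],\ldots,\bar{\mathbf{y}}[b]]$; the deinterleaver is the inverse of step (2), i.e. $\tilde{y}[s+(l-1)b]$ is the $l$-th entry of $\bar{\mathbf{y}}[s]$. *)

theory Defs
  imports "HOL-Probability.Probability" "Berlekamp_Zassenhaus.Finite_Field"
begin

text \<open>Conventions: all vectors are 0-based. A length-N vector is a function nat => 'a,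
  only indices below N are meaningful. Time indices of the channel are integers.\<close>

definition cshift :: "nat \<Rightarrow> int \<Rightarrow> (nat \<Rightarrow> 'a::zero) \<Rightarrow> nat \<Rightarrow> 'a" where
  "cshift N t x n = (if n < N then x (nat ((int n - t) mod int N)) else 0)"

definition is_QC :: "nat \<Rightarrow> nat \<Rightarrow> (nat \<Rightarrow> 'a::zero) set \<Rightarrow> bool" where
  "is_QC N b C = (\<forall>c\<in>C. \<forall>i::int. cshift N (int b * i) c \<in> C)"

definition sys_linear_code :: "nat \<Rightarrow> nat \<Rightarrow> (nat \<Rightarrow> 'f::field) set \<Rightarrow> bool" where
  "sys_linear_code N K C =
     (\<exists>G :: nat \<Rightarrow> nat \<Rightarrow> 'f.
        (\<exists>J. inj_on J {..<K} \<and> J ` {..<K} \<subseteq> {..<N} \<and>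
             (\<forall>i<K. \<forall>k<K. G i (J k) = (if i = k then 1 else 0))) \<and>
        C = {c. \<exists>m :: nat \<Rightarrow> 'f. c = (\<lambda>j. if j < N then (\<Sum>i<K. m i * G i j) else 0)})"

definition Mmap :: "'p::prime_card mod_ring \<Rightarrow> real" where
  "Mmap u = (let p = int CARD('p); v = to_int_mod_ring u in
     if p = 2 then real_of_int v - 1/2
     else if 2 * v \<le> p - 1 then real_of_int v else real_of_int (v - p))"

definition interleave :: "nat \<Rightarrow> (nat \<Rightarrow> real) \<Rightarrow> nat \<Rightarrow> nat \<Rightarrow> real" where
  "interleave b xt s l = xt (s + l * b)"

text \<open>Transmitted frame (time index n, 0-based, zero outside the frame): the first kb = r_d b
  sub-blocks are sent as is (length L each), each of the remaining b - kb sub-blocks is sent with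
  a cyclic prefix of length D (the last D entries of the sub-block), total length L + D.\<close>
definition tx_frame :: "nat \<Rightarrow> nat \<Rightarrow> nat \<Rightarrow> nat \<Rightarrow> (nat \<Rightarrow> real) \<Rightarrow> int \<Rightarrow> real" where
  "tx_frame b L kb D xt n =
     (if 0 \<le> n \<and> n < int (kb * L) then interleave b xt (nat n div L) (nat n mod L)
      else if int (kb * L) \<le> n \<and> n < int (kb * L + (b - kb) * (L + D)) then
        (let m = nat (n - int (kb * L)); s = kb + m div (L + D); j = m mod (L + D) in
           if j < D then interleave b xt s (L - D + j) else interleave b xt s (j - D))
      else 0)"

text \<open>Start position (in the undelayed frame) of sub-block s without its cyclic prefix.\<close>
definition sub_start :: "nat \<Rightarrow> nat \<Rightarrow> nat \<Rightarrow> nat \<Rightarrow> nat" where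
  "sub_start L kb D s = (if s < kb then s * L else kb * L + (s - kb) * (L + D) + D)"

text \<open>CP removal followed by deinterleaving: output entry s + l b (s < b, l < L) is the l-th
  sample of the length-L window located at the position of sub-block s.\<close>
definition cp_remove_deint :: "nat \<Rightarrow> nat \<Rightarrow> nat \<Rightarrow> nat \<Rightarrow> (int \<Rightarrow> real) \<Rightarrow> nat \<Rightarrow> real" where
  "cp_remove_deint b L kb D y n = y (int (sub_start L kb D (n mod b) + n div b))"

end

theory Submission
  imports Defs
begin

text \<open>Delaying the frame by \<open>\<tau> \<le> D\<close> samples moves every length-\<open>L\<close> receive window
  \<open>\<tau>\<close> samples into the past. For a sub-block with cyclic prefix the window then starts
  inside the prefix, so it reads the sub-block rotated by \<open>\<tau>\<close>. For a message sub-block the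
  window starts in the frozen (zero) tail of the previous sub-block, or before the frame, and the
  \<open>\<tau>\<close> samples it loses at the end are frozen zeros too, so it reads the same rotation.
  Deinterleaving turns a rotation by \<open>\<tau>\<close> of all \<open>b\<close> sub-blocks into a circular shift
  of the whole word by \<open>b \<tau>\<close>, and quasi-cyclicity keeps the shifted codeword in the code.
  The windows are disjoint, so the noise samples they pick are distinct, hence again i.i.d.
  standard normal.\<close>

lemma (in prob_space) indep_sets_reindex:
  assumes inj: "inj_on g I" and ind: "indep_sets F (g ` I)"
  shows "indep_sets (\<lambda>i. F (g i)) I"
  unfolding indep_sets_def
proof (intro conjI ballI allI impI)
  fix i assume "i \<in> I"
  then show "F (g i) \<subseteq> events" using ind by (auto simp: indep_sets_def)
next
  fix J A assume J: "J \<subseteq> I" "J \<noteq> {}" "finite J" and A: "A \<in> Pi J (\<lambda>i. F (g i))"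
  have injJ: "inj_on g J" using inj J(1) inj_on_subset by blast
  define A' where "A' = (\<lambda>k. A (the_inv_into J g k))"
  have A'_g: "A' (g j) = A j" if "j \<in> J" for j
    using that injJ by (simp add: A'_def the_inv_into_f_f)
  have "A' \<in> Pi (g ` J) F" using A A'_g by auto
  moreover have "g ` J \<subseteq> g ` I" "g ` J \<noteq> {}" "finite (g ` J)" using J by auto
  ultimately have "prob (\<Inter>k\<in>g ` J. A' k) = (\<Prod>k\<in>g ` J. prob (A' k))"
    using ind unfolding indep_sets_def by blast
  moreover have "(\<Inter>k\<in>g ` J. A' k) = (\<Inter>j\<in>J. A j)" using A'_g by auto
  moreover have "(\<Prod>k\<in>g ` J. prob (A' k)) = (\<Prod>j\<in>J. prob (A j))"
    using injJ A'_g by (simp add: prod.reindex)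
  ultimately show "prob (\<Inter>j\<in>J. A j) = (\<Prod>j\<in>J. prob (A j))" by simp
qed

lemma (in prob_space) indep_vars_reindex:
  assumes "inj_on g I" "indep_vars M' X (g ` I)"
  shows "indep_vars (\<lambda>i. M' (g i)) (\<lambda>i. X (g i)) I"
  using assms unfolding indep_vars_def2
  by (auto intro: indep_sets_reindex[where F="\<lambda>i. {X i -` A \<inter> space M | A. A \<in> sets (M' i)}"])

lemma interleaved_index_less:
  fixes s l b L :: nat
  assumes "s < b" "l < L"
  shows "s + l * b < b * L"
proof -
  have "s + l * b < Suc l * b" using assms(1) by simp
  also have "\<dots> \<le> L * b" using assms(2) by (intro mult_right_mono) auto
  finally show ?thesis by (simp add: mult.commute)
qed

lemma cshift_interleaved:
  fixes x :: "nat \<Rightarrow> 'a::zero"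
  assumes "s < b" "l < L" "\<tau> \<le> L"
  shows "cshift (b * L) (int (b * \<tau>)) x (s + l * b) = x (s + ((L + l - \<tau>) mod L) * b)"
proof -
  have rot: "(int l - int \<tau>) mod int L = int ((L + l - \<tau>) mod L)"
  proof -
    have "(int l - int \<tau>) mod int L = (int L + (int l - int \<tau>)) mod int L"
      by simp
    also have "\<dots> = int ((L + l - \<tau>) mod L)"
      using assms(3) by (simp add: zmod_int of_nat_diff algebra_simps)
    finally show ?thesis .
  qed
  have "int (s + l * b) - int (b * \<tau>) = int s + (int l - int \<tau>) * int b"
    by (simp add: algebra_simps)
  then have "(int (s + l * b) - int (b * \<tau>)) mod int (b * L)
      = int b * ((int s + (int l - int \<tau>) * int b) div int b mod int L)
        + (int s + (int l - int \<tau>) * int b) mod int b"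
    by (simp only: of_nat_mult[of b L] zmod_zmult2_eq[OF of_nat_0_le_iff])
  also have "\<dots> = int (s + ((L + l - \<tau>) mod L) * b)"
    using assms(1) rot by simp
  finally have "nat ((int (s + l * b) - int (b * \<tau>)) mod int (b * L)) = s + ((L + l - \<tau>) mod L) * b"
    by (simp only: nat_int)
  then show ?thesis
    using interleaved_index_less[OF assms(1,2)] by (simp add: cshift_def)
qed

lemma tx_frame_before_start:
  assumes "n < 0"
  shows "tx_frame b L kb D xt n = 0"
  using assms by (simp add: tx_frame_def del: of_nat_mult of_nat_add)

lemma tx_frame_message_part:
  assumes "n < kb * L"
  shows "tx_frame b L kb D xt (int n) = interleave b xt (n div L) (n mod L)"
  using assms by (simp add: tx_frame_def del: of_nat_mult)

lemma tx_frame_prefixed_part: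
  assumes "m < (b - kb) * (L + D)"
  shows "tx_frame b L kb D xt (int (kb * L + m)) =
    (if m mod (L + D) < D then interleave b xt (kb + m div (L + D)) (L - D + m mod (L + D))
     else interleave b xt (kb + m div (L + D)) (m mod (L + D) - D))"
  using assms by (simp add: tx_frame_def Let_def del: of_nat_mult)

lemma tx_frame_delayed_window_prefixed:
  assumes "kb \<le> s" "s < b" "l < L" "\<tau> \<le> D" "D \<le> L"
  shows "tx_frame b L kb D xt (int (sub_start L kb D s + l) - int \<tau>)
    = interleave b xt s ((L + l - \<tau>) mod L)"
proof -
  define j where "j = D + l - \<tau>"
  define m where "m = (s - kb) * (L + D) + j"
  have j_less: "j < L + D" using assms unfolding j_def by arith
  have "m < Suc (s - kb) * (L + D)" using j_less unfolding m_def by simp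
  also have "\<dots> \<le> (b - kb) * (L + D)" using assms(1,2) by (intro mult_right_mono) auto
  finally have m_less: "m < (b - kb) * (L + D)" .
  have "m = j + (s - kb) * (L + D)" unfolding m_def by simp
  moreover have "L + D \<noteq> 0" using assms(3) by simp
  ultimately have "m div (L + D) = s - kb" "m mod (L + D) = j"
    using j_less by simp_all
  moreover have "int (sub_start L kb D s + l) - int \<tau> = int (kb * L + m)"
    using assms(1,4) unfolding m_def j_def sub_start_def by simp
  ultimately have "tx_frame b L kb D xt (int (sub_start L kb D s + l) - int \<tau>)
      = (if j < D then interleave b xt s (L - D + j) else interleave b xt s (j - D))"
    using tx_frame_prefixed_part[OF m_less, of xt] assms(1) by simp
  also have "\<dots> = interleave b xt s ((L + l - \<tau>) mod L)"
    using assms(3-5) unfolding j_def by (auto simp: le_mod_geq)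
  finally show ?thesis .
qed

lemma tx_frame_delayed_window_message:
  assumes "s < kb" "l < L" "\<tau> \<le> D" "D \<le> L"
    and frozen: "\<forall>s<kb. \<forall>l. L - D \<le> l \<and> l < L \<longrightarrow> interleave b xt s l = 0"
  shows "tx_frame b L kb D xt (int (sub_start L kb D s + l) - int \<tau>)
    = interleave b xt s ((L + l - \<tau>) mod L)"
proof (cases "\<tau> \<le> l")
  case True
  have "s * L + (l - \<tau>) < Suc s * L" using assms(2) by simp
  also have "\<dots> \<le> kb * L" using assms(1) by (intro mult_right_mono) auto
  finally have inside: "s * L + (l - \<tau>) < kb * L" .
  have "int (sub_start L kb D s + l) - int \<tau> = int (s * L + (l - \<tau>))"
    using assms(1) True by (simp add: sub_start_def)
  moreover have "(s * L + (l - \<tau>)) div L = s" "(s * L + (l - \<tau>)) mod L = l - \<tau>"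
    using assms(2) by simp_all
  ultimately show ?thesis
    using True assms(2) by (simp only: tx_frame_message_part[OF inside]) (simp add: le_mod_geq)
next
  case False
  define l' where "l' = L + l - \<tau>"
  have l'_tail: "L - D \<le> l'" "l' < L" using False assms(2-4) unfolding l'_def by arith+
  have "interleave b xt s ((L + l - \<tau>) mod L) = 0"
    using frozen assms(1) l'_tail unfolding l'_def by simp
  moreover have "tx_frame b L kb D xt (int (sub_start L kb D s + l) - int \<tau>) = 0"
  proof (cases s)
    case 0
    then have "int (sub_start L kb D s + l) - int \<tau> < 0"
      using False assms(1) by (simp add: sub_start_def)
    then show ?thesis by (rule tx_frame_before_start)
  next
    case (Suc s')
    have "s' * L + l' < Suc s' * L" using l'_tail by simp
    also have "\<dots> \<le> kb * L" using assms(1) Suc by (intro mult_right_mono) auto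
    finally have inside: "s' * L + l' < kb * L" .
    have "int (sub_start L kb D s + l) - int \<tau> = int (s' * L + l')"
      using assms(1,3,4) Suc unfolding l'_def sub_start_def by (simp add: of_nat_diff)
    then show ?thesis
      using frozen Suc assms(1) l'_tail
      by (simp only: tx_frame_message_part[OF inside]) simp
  qed
  ultimately show ?thesis by simp
qed

lemma tx_frame_delayed_window:
  assumes "s < b" "l < L" "\<tau> \<le> D" "D \<le> L" "kb \<le> b"
    and frozen: "\<forall>s<kb. \<forall>l. L - D \<le> l \<and> l < L \<longrightarrow> interleave b xt s l = 0"
  shows "tx_frame b L kb D xt (int (sub_start L kb D s + l) - int \<tau>)
    = interleave b xt s ((L + l - \<tau>) mod L)"
proof (cases "s < kb")
  case True
  then show ?thesis using assms by (intro tx_frame_delayed_window_message)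
next
  case False
  then show ?thesis using assms by (intro tx_frame_delayed_window_prefixed) simp_all
qed

lemma cp_remove_deint_delayed_frame:
  assumes "i < b * L" "\<tau> \<le> D" "D \<le> L" "kb \<le> b"
    and frozen: "\<forall>s<kb. \<forall>l. L - D \<le> l \<and> l < L \<longrightarrow> interleave b xt s l = 0"
  shows "cp_remove_deint b L kb D (\<lambda>n. tx_frame b L kb D xt (n - int \<tau>) + w n) i
    = cshift (b * L) (int (b * \<tau>)) xt i + w (int (sub_start L kb D (i mod b) + i div b))"
proof -
  have "b > 0" using assms(1) by (cases b) simp_all
  then have s: "i mod b < b" and l: "i div b < L"
    using assms(1) by (simp_all add: div_less_iff_less_mult mult.commute)
  have "tx_frame b L kb D xt (int (sub_start L kb D (i mod b) + i div b) - int \<tau>)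
      = cshift (b * L) (int (b * \<tau>)) xt (i mod b + i div b * b)"
    using tx_frame_delayed_window[OF s l assms(2-4) frozen]
      cshift_interleaved[OF s l, of \<tau> xt] assms(2,3)
    by (simp add: interleave_def)
  then show ?thesis by (simp add: cp_remove_deint_def)
qed

lemma sub_start_add_le:
  assumes "s < s'"
  shows "sub_start L kb D s + L \<le> sub_start L kb D s'"
proof -
  have "s * L + L \<le> s' * L" using assms
    by (metis Suc_leI add.commute mult_Suc mult_le_cancel2)
  moreover have "s * L + L \<le> kb * L" if "s < kb"
    using that by (metis Suc_leI add.commute mult_Suc mult_le_cancel2)
  moreover have "(s - kb) * (L + D) + (L + D) \<le> (s' - kb) * (L + D)" if "kb \<le> s"
  proof -
    have "Suc (s - kb) \<le> s' - kb" using that assms by arith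
    then show ?thesis by (metis add.commute mult_Suc mult_le_cancel2)
  qed
  ultimately show ?thesis using assms by (auto simp: sub_start_def)
qed

lemma inj_on_window_position:
  "inj_on (\<lambda>i. int (sub_start L kb D (i mod b) + i div b)) {..<b * L}"
proof (rule inj_onI)
  fix i j assume "i \<in> {..<b * L}" "j \<in> {..<b * L}"
    and eq: "int (sub_start L kb D (i mod b) + i div b) = int (sub_start L kb D (j mod b) + j div b)"
  then have "b > 0" by (cases b) simp_all
  then have "i div b < L" "j div b < L"
    using \<open>i \<in> _\<close> \<open>j \<in> _\<close> by (simp_all add: div_less_iff_less_mult mult.commute)
  moreover have eq': "sub_start L kb D (i mod b) + i div b = sub_start L kb D (j mod b) + j div b"
    using eq by simp
  ultimately have "i mod b = j mod b"
    using sub_start_add_le[of "i mod b" "j mod b" L kb D] sub_start_add_le[of "j mod b" "i mod b" L kb D]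
    by (cases "i mod b" "j mod b" rule: linorder_cases) linarith+
  then show "i = j" using eq' by (metis add_left_cancel div_mult_mod_eq)
qed

theorem lemma6:
  fixes P :: "'w measure"
    and C :: "(nat \<Rightarrow> 'p::prime_card mod_ring) set"
    and c :: "nat \<Rightarrow> 'p mod_ring"
    and b L kb D N' K \<tau> :: nat
    and z :: "int \<Rightarrow> 'w \<Rightarrow> real"
  assumes "prob_space P"
    and "b > 0" and "N' = b * L"
    and "K = kb * L" and "kb \<le> b"
    and "sys_linear_code N' K C"
    and "is_QC N' b C"
    and "D < L" and "\<tau> \<le> D"
    and "c \<in> C"
    and frozen: "\<forall>s<kb. \<forall>l. L - D \<le> l \<and> l < L \<longrightarrow> interleave b (\<lambda>n. Mmap (c n)) s l = 0"
    and noise_indep: "prob_space.indep_vars P (\<lambda>_. borel) z UNIV"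
    and noise_distr: "\<forall>n. distributed P lborel (z n) (\<lambda>x. ennreal (std_normal_density x))"
  shows "\<exists>zt :: nat \<Rightarrow> 'w \<Rightarrow> real.
           (\<forall>\<omega>. \<forall>i<N'.
              cp_remove_deint b L kb D
                (\<lambda>n. tx_frame b L kb D (\<lambda>k. Mmap (c k)) (n - int \<tau>) + z n \<omega>) i
              = cshift N' (int (b * \<tau>)) (\<lambda>k. Mmap (c k)) i + zt i \<omega>)
         \<and> prob_space.indep_vars P (\<lambda>_. borel) zt {..<N'}
         \<and> (\<forall>i<N'. distributed P lborel (zt i) (\<lambda>x. ennreal (std_normal_density x)))
         \<and> (\<forall>i<N'. cshift N' (int (b * \<tau>)) (\<lambda>k. Mmap (c k)) i = Mmap (cshift N' (int (b * \<tau>)) c i))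
         \<and> cshift N' (int (b * \<tau>)) c \<in> C"
proof -
  let ?xt = "\<lambda>k. Mmap (c k)"
  define pos where "pos = (\<lambda>i. int (sub_start L kb D (i mod b) + i div b))"
  define zt where "zt = (\<lambda>i. z (pos i))"
  interpret P: prob_space P by fact
  have "\<forall>\<omega>. \<forall>i<N'.
      cp_remove_deint b L kb D (\<lambda>n. tx_frame b L kb D ?xt (n - int \<tau>) + z n \<omega>) i
      = cshift N' (int (b * \<tau>)) ?xt i + zt i \<omega>"
    using cp_remove_deint_delayed_frame[OF _ \<open>\<tau> \<le> D\<close> _ \<open>kb \<le> b\<close> frozen] \<open>D < L\<close> \<open>N' = b * L\<close>
    unfolding zt_def pos_def by simp
  moreover have "P.indep_vars (\<lambda>_. borel) zt {..<N'}"
  proof -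
    have "inj_on pos {..<N'}"
      unfolding pos_def \<open>N' = b * L\<close> by (rule inj_on_window_position)
    moreover have "P.indep_vars (\<lambda>_. borel) z (pos ` {..<N'})"
      using P.indep_vars_subset[OF noise_indep] by blast
    ultimately show ?thesis
      unfolding zt_def by (rule P.indep_vars_reindex)
  qed
  moreover have "\<forall>i<N'. distributed P lborel (zt i) (\<lambda>x. ennreal (std_normal_density x))"
    using noise_distr unfolding zt_def by simp
  moreover have "\<forall>i<N'. cshift N' (int (b * \<tau>)) ?xt i = Mmap (cshift N' (int (b * \<tau>)) c i)"
    by (simp add: cshift_def)
  moreover have "cshift N' (int (b * \<tau>)) c \<in> C"
    using \<open>is_QC N' b C\<close> \<open>c \<in> C\<close> unfolding is_QC_def by (metis of_nat_mult)
  ultimately show ?thesis by blast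
qed

end
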